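(* For all integers $n\geq 1$, the rockers function $\lambda$ satisfies the asymptotic relation \[ \lambda(n)\sim \frac{n^{\,n-\frac{1}{2n}-\frac{1}{2}}\sqrt{2\pi}}{e^{\,n+\Psi(n)-1}}\qquad (n\to\infty), \] where \[ \Psi(n):=\int_{1}^{n-1}\frac{\sum_{1\leq j\leq t}\log (n-j)}{(t+1)^2}\,dt . \]
   Context: The rockers function $\lambda:\mathbb{N}\to\mathbb{R}^{+}$ is defined by $\lambda(1)=1$, $\lambda(2)=2$, and for $n\geq 3$, \[ \lambda(n)=2^{\frac{n-2}{n-1}}\,3^{\frac{n-3}{n-2}}\cdots (n-1)^{\frac{1}{2}}\, n=\prod_{k=0}^{n-2}(n-k)^{\frac{k}{k+1}} . \] Here $\log$ denotes the natural logarithm, the sum $\sum_{1\le j\le t}$ runs over integers $j$ with $1\le j\le t$ (for real $t$), and $f(n)\sim g(n)$ means $f(n)/g(n)\to 1$ as $n\to\infty$. *)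

theory Defs
  imports "HOL-Analysis.Analysis" "HOL-Library.Landau_Symbols"
begin

(* Rockers function: lambda(n) = 2^((n-2)/(n-1)) 3^((n-3)/(n-2)) ... (n-1)^(1/2) n,
   i.e. n * prod_{k=1}^{n-2} (n-k)^(k/(k+1)); gives lambda(1)=1, lambda(2)=2. *)
definition rockers :: "nat \<Rightarrow> real" where
  "rockers n = real n * (\<Prod>k\<in>{1..n-2}. real (n - k) powr (real k / real (k + 1)))"

definition Psi :: "nat \<Rightarrow> real" where
  "Psi n = integral {1..real n - 1}
     (\<lambda>t. (\<Sum>j\<in>{1..nat \<lfloor>t\<rfloor>}. ln (real n - real j)) / (t + 1)^2)"

end

theory Submission
  imports Defs "HOL-Real_Asymp.Real_Asymp"
begin

text \<open>
  Taking logarithms, ln \<lambda>(n) = ln n + \<Sum> (k/(k+1)) ln (n-k) splits into ln (n!) minus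
  \<Sum> ln (n-k)/(k+1). Summation by parts turns the latter sum into the integral \<Psi>(n) plus
  ln ((n-1)!)/n, because the integrand of \<Psi>(n) is constant on every [k, k+1).
  Hence ln \<lambda>(n) = (1 - 1/n) ln (n!) + ln n / n - \<Psi>(n), and Stirling's formula,
  proved here from Wallis' product, gives the claim.
\<close>

section \<open>Stirling's formula\<close>

lemma ln_one_plus_ge:
  fixes y :: real assumes "y \<ge> 0" shows "2 * y / (2 + y) \<le> ln (1 + y)"
proof -
  let ?h = "\<lambda>y::real. ln (1 + y) - 2 * y / (2 + y)"
  have "?h 0 \<le> ?h y"
  proof (rule DERIV_nonneg_imp_nondecreasing[OF assms])
    fix x :: real assume x: "0 \<le> x" "x \<le> y"
    have "(?h has_real_derivative (1/(1+x) - (2*(2+x) - 2*x)/(2+x)^2)) (at x)"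
      using x by (auto intro!: derivative_eq_intros simp: power2_eq_square)
    moreover have "1/(1+x) - (2*(2+x) - 2*x)/(2+x)^2 = x^2 / ((1+x) * (2+x)^2)"
      using x by (simp add: divide_simps power2_eq_square) (simp add: algebra_simps)
    moreover have "x^2 / ((1+x) * (2+x)^2) \<ge> 0" using x by simp
    ultimately show "\<exists>d. (?h has_real_derivative d) (at x) \<and> 0 \<le> d" by metis
  qed
  thus ?thesis by simp
qed

lemma ln_one_plus_le:
  fixes y :: real assumes "y \<ge> 0" shows "ln (1 + y) \<le> y - y^2/2 + y^3/3"
proof -
  let ?h = "\<lambda>y::real. y - y^2/2 + y^3/3 - ln (1 + y)"
  have "?h 0 \<le> ?h y"
  proof (rule DERIV_nonneg_imp_nondecreasing[OF assms])
    fix x :: real assume x: "0 \<le> x" "x \<le> y"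
    have "(?h has_real_derivative (1 - x + x^2 - 1/(1+x))) (at x)"
      using x by (auto intro!: derivative_eq_intros simp: power2_eq_square)
    moreover have "1 - x + x^2 - 1/(1+x) = x^3 / (1+x)"
      using x by (simp add: field_simps power2_eq_square power3_eq_cube)
    moreover have "x^3 / (1+x) \<ge> 0" using x by simp
    ultimately show "\<exists>d. (?h has_real_derivative d) (at x) \<and> 0 \<le> d" by metis
  qed
  thus ?thesis by simp
qed

definition stirling_error :: "nat \<Rightarrow> real" where
  "stirling_error n = ln (fact n) - (real n + 1/2) * ln (real n) + real n"

lemma stirling_error_diff:
  assumes "n \<ge> 1"
  shows "stirling_error n - stirling_error (Suc n) = (real n + 1/2) * ln (1 + 1/real n) - 1"
proof -
  have fact_Suc: "ln (fact (Suc n) :: real) = ln (real n + 1) + ln (fact n)"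
    by (simp add: ln_mult add.commute)
  have "1 + 1/real n = (real n + 1) / real n"
    using assms by (simp add: field_simps)
  hence ln_ratio: "ln (1 + 1/real n) = ln (real n + 1) - ln (real n)"
    using assms by (simp add: ln_div)
  show ?thesis
    unfolding stirling_error_def
    by (simp only: fact_Suc ln_ratio of_nat_Suc) (simp add: algebra_simps)
qed

lemma stirling_error_Suc_le:
  assumes "n \<ge> 1" shows "stirling_error (Suc n) \<le> stirling_error n"
proof -
  have n: "real n \<ge> 1" using assms by simp
  have "2 * (1/real n) / (2 + 1/real n) \<le> ln (1 + 1/real n)"
    by (rule ln_one_plus_ge) simp
  moreover have "2 * (1/real n) / (2 + 1/real n) = 1 / (real n + 1/2)"
    using n by (simp add: field_simps)
  ultimately have "1 \<le> (real n + 1/2) * ln (1 + 1/real n)"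
    using n by (simp add: field_simps)
  thus ?thesis using stirling_error_diff[OF assms] by simp
qed

lemma stirling_error_diff_le:
  assumes "n \<ge> 1"
  shows "stirling_error n - stirling_error (Suc n) \<le> 1/(2 * real n) - 1/(2 * (real n + 1))"
proof -
  have n: "real n \<ge> 1" using assms by simp
  define y where "y = 1 / real n"
  have y: "0 < y" "y \<le> 1" using n by (auto simp: y_def)
  have "(real n + 1/2) * ln (1 + y) - 1 \<le> (real n + 1/2) * (y - y^2/2 + y^3/3) - 1"
    using n y by (intro diff_right_mono mult_left_mono ln_one_plus_le) auto
  also have "\<dots> = y^2/12 + y^3/6"
    using n by (simp add: y_def field_simps power2_eq_square power3_eq_cube)
  also have "\<dots> \<le> y^2/4"
    using power_decreasing[of 2 3 y] y by simp
  also have "y^2/4 \<le> 1/(2 * real n * (real n + 1))"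
    using n by (simp add: y_def power2_eq_square divide_simps)
  also have "\<dots> = 1/(2 * real n) - 1/(2 * (real n + 1))"
    using n by (simp add: field_simps)
  finally show ?thesis using stirling_error_diff[OF assms] by (simp add: y_def)
qed

lemma convergent_stirling_error: "convergent stirling_error"
proof -
  define X where "X i = stirling_error (Suc i)" for i
  have "decseq X"
    unfolding X_def by (intro decseq_SucI stirling_error_Suc_le) simp
  \<comment> \<open>Subtracting the telescoping bound makes the sequence increasing, hence X is bounded below.\<close>
  define Y where "Y i = stirling_error (Suc i) - 1/(2 * (real i + 1))" for i
  have "incseq Y"
  proof (intro incseq_SucI)
    fix i
    show "Y i \<le> Y (Suc i)"
      using stirling_error_diff_le[of "Suc i"] unfolding Y_def by (simp add: algebra_simps)
  qed
  have "1/2 \<le> X i" for i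
  proof -
    have "Y 0 \<le> Y i" using \<open>incseq Y\<close> by (simp add: incseq_def)
    moreover have "Y 0 = 1/2" by (simp add: Y_def stirling_error_def)
    moreover have "0 \<le> 1/(2 * (real i + 1))" by simp
    ultimately show ?thesis unfolding Y_def X_def by linarith
  qed
  then obtain L where "X \<longlonglongrightarrow> L"
    using decseq_convergent[OF \<open>decseq X\<close>] by blast
  hence "stirling_error \<longlonglongrightarrow> L" unfolding X_def by (rule LIMSEQ_imp_Suc)
  thus ?thesis by (rule convergentI)
qed

lemma wallis_partial_product:
  "(\<Prod>k=1..n. 4 * real k^2 / (4 * real k^2 - 1))
     = (2^n * fact n)^4 / ((fact (2*n))^2 * (2 * real n + 1))"
proof (induction n)
  case 0 then show ?case by simp
next
  case (Suc n)
  have fact_double: "(fact (2 * Suc n) :: real) = (2 * real n + 2) * (2 * real n + 1) * fact (2*n)"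
    by (simp add: algebra_simps)
  have factor: "4 * real (Suc n)^2 - 1 = (2 * real n + 1) * (2 * real n + 3)"
    by (simp add: algebra_simps power2_eq_square)
  have step: "\<And>a F G x::real. a > 0 \<Longrightarrow> F > 0 \<Longrightarrow> G > 0 \<Longrightarrow> x \<ge> 0 \<Longrightarrow>
      (a*F)^4 / (G^2 * (2*x+1)) * (4*(x+1)^2 / ((2*x+1) * (2*x+3))) =
      (2*a*((x+1)*F))^4 / (((2*x+2) * (2*x+1) * G)^2 * (2*(x+1)+1))"
    by (simp add: divide_simps) (simp add: algebra_simps power2_eq_square power4_eq_xxxx)
  show ?case
    unfolding prod.cl_ivl_Suc Suc.IH fact_double
    using step[of "2^n" "fact n" "fact (2*n)" "real n"] factor
    by (simp add: mult.assoc ac_simps)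
qed

lemma ln_wallis_partial_product:
  assumes "n \<ge> 1"
  shows "ln (\<Prod>k=1..n. 4 * real k^2 / (4 * real k^2 - 1))
           = 4 * stirling_error n - 2 * stirling_error (2*n) - ln 2 - ln (2 + 1/real n)"
proof -
  have n: "real n > 0" using assms by simp
  have "ln (\<Prod>k=1..n. 4 * real k^2 / (4 * real k^2 - 1))
          = 4 * (real n * ln 2 + ln (fact n)) - 2 * ln (fact (2*n)) - ln (2 * real n + 1)"
    unfolding wallis_partial_product using n by (simp add: ln_div ln_mult ln_realpow)
  also have "ln (fact n) = stirling_error n + (real n + 1/2) * ln (real n) - real n"
    by (simp add: stirling_error_def)
  also have "ln (fact (2*n)) = stirling_error (2*n) + (2 * real n + 1/2) * (ln 2 + ln (real n)) - 2 * real n"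
    using n by (simp add: stirling_error_def ln_mult)
  also have "ln (2 * real n + 1) = ln (real n) + ln (2 + 1/real n)"
  proof -
    have "2 * real n + 1 = real n * (2 + 1/real n)" using n by (simp add: field_simps)
    moreover have "2 + 1/real n > 0" using n by (simp add: add_pos_pos)
    ultimately show ?thesis using n by (simp add: ln_mult)
  qed
  finally show ?thesis by (simp add: algebra_simps)
qed

lemma stirling_error_limit: "stirling_error \<longlonglongrightarrow> ln (2 * pi) / 2"
proof -
  obtain L where L: "stirling_error \<longlonglongrightarrow> L"
    using convergent_stirling_error by (auto simp: convergent_def)
  have L_double: "(\<lambda>n. stirling_error (2*n)) \<longlonglongrightarrow> L"
    using LIMSEQ_subseq_LIMSEQ[OF L, of "\<lambda>n. 2*n"] by (simp add: strict_mono_def o_def)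
  have ln_lim: "(\<lambda>n. ln (2 + 1/real n)) \<longlonglongrightarrow> ln 2" by real_asymp
  have lim_L: "(\<lambda>n. 4 * stirling_error n - 2 * stirling_error (2*n) - ln 2 - ln (2 + 1/real n))
                    \<longlonglongrightarrow> 4*L - 2*L - ln 2 - ln 2"
    by (intro tendsto_intros L L_double ln_lim)
  have "(\<lambda>n. ln (\<Prod>k=1..n. 4 * real k^2 / (4 * real k^2 - 1))) \<longlonglongrightarrow> ln (pi/2)"
    by (intro tendsto_ln wallis) simp
  moreover have "eventually (\<lambda>n. ln (\<Prod>k=1..n. 4 * real k^2 / (4 * real k^2 - 1))
      = 4 * stirling_error n - 2 * stirling_error (2*n) - ln 2 - ln (2 + 1/real n)) sequentially"
    using eventually_ge_at_top[of "1::nat"] by eventually_elim (rule ln_wallis_partial_product)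
  ultimately have "(\<lambda>n. 4 * stirling_error n - 2 * stirling_error (2*n) - ln 2 - ln (2 + 1/real n))
                     \<longlonglongrightarrow> ln (pi/2)"
    by (rule Lim_transform_eventually)
  hence "4*L - 2*L - ln 2 - ln 2 = ln (pi/2)" using lim_L LIMSEQ_unique by blast
  moreover have "ln (pi/2) = ln pi - ln 2" "ln (2*pi) = ln 2 + ln pi"
    by (simp_all add: ln_div ln_mult)
  ultimately have "L = ln (2*pi) / 2" by linarith
  with L show ?thesis by simp
qed

section \<open>The integral \<Psi> as a finite sum\<close>

lemma sum_partial_sums_telescoping:
  fixes a :: "nat \<Rightarrow> real"
  shows "(\<Sum>k=1..N. (\<Sum>j=1..k. a j) * (1/(real k + 1) - 1/(real k + 2)))
         = (\<Sum>k=1..N. a k / (real k + 1)) - (\<Sum>j=1..N. a j) / (real N + 2)"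
proof (induction N)
  case 0 then show ?case by simp
next
  case (Suc N)
  have split_last: "\<And>f::nat \<Rightarrow> real. sum f {1..Suc N} = sum f {1..N} + f (Suc N)" by simp
  have step: "P - S/(x+2) + (S+b) * (1/(x+1+1) - 1/(x+1+2)) = (P + b/(x+1+1)) - (S+b)/(x+1+2)"
    if "x \<ge> 0" for P S b x :: real
  proof -
    have "x + 1 + 1 = x + 2" "x + 1 + 2 = x + 3" by simp_all
    thus ?thesis by (simp add: diff_divide_distrib add_divide_distrib right_diff_distrib)
  qed
  show ?case
    unfolding split_last Suc.IH of_nat_Suc
    using step[of "real N" "\<Sum>k=1..N. a k / (real k + 1)" "\<Sum>j=1..N. a j" "a (Suc N)"] by simp
qed

lemma has_integral_inverse_square_shift:
  fixes c :: real and m :: nat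
  shows "((\<lambda>t. c / (t + 1)^2) has_integral (c * (1/(real m + 1) - 1/(real m + 2)))) {real m..real m + 1}"
proof -
  have "((\<lambda>t. c / (t + 1)^2) has_integral ((\<lambda>t. - c/(t+1)) (real m + 1) - (\<lambda>t. - c/(t+1)) (real m)))
          {real m..real m + 1}"
  proof (rule fundamental_theorem_of_calculus)
    fix x assume "x \<in> {real m..real m + 1}"
    hence "x + 1 \<noteq> 0" by auto
    hence "((\<lambda>t. - c/(t+1)) has_real_derivative c / (x + 1)^2) (at x)"
      by (auto intro!: derivative_eq_intros simp: power2_eq_square field_simps)
    thus "((\<lambda>t. - c/(t+1)) has_vector_derivative c / (x + 1)^2) (at x within {real m..real m + 1})"
      by (simp add: has_real_derivative_iff_has_vector_derivative has_vector_derivative_at_within)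
  qed simp
  thus ?thesis by (simp add: field_simps)
qed

lemma has_integral_partial_sums_over_square:
  fixes a :: "nat \<Rightarrow> real" and m :: nat
  assumes "m \<ge> 1"
  shows "((\<lambda>t. (\<Sum>j\<in>{1..nat \<lfloor>t\<rfloor>}. a j) / (t + 1)^2) has_integral
          (\<Sum>k=1..m-1. (\<Sum>j=1..k. a j) * (1/(real k + 1) - 1/(real k + 2)))) {1..real m}"
  using assms
proof (induction m rule: nat_induct_at_least)
  case base
  then show ?case using has_integral_refl(2)[of _ "1::real"] by simp
next
  case (Suc m)
  let ?g = "\<lambda>t. (\<Sum>j\<in>{1..nat \<lfloor>t\<rfloor>}. a j) / (t + 1)^2"
  let ?c = "\<Sum>j=1..m. a j"
  have last_piece: "(?g has_integral (?c * (1/(real m + 1) - 1/(real m + 2)))) {real m..real m + 1}"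
  proof (rule has_integral_spike_finite[of "{real m + 1}"])
    fix t assume "t \<in> {real m..real m + 1} - {real m + 1}"
    hence "\<lfloor>t\<rfloor> = int m" by (auto intro!: floor_unique)
    thus "?g t = ?c / (t + 1)^2" by simp
  qed (simp_all add: has_integral_inverse_square_shift)
  have "(\<Sum>k=1..Suc m - 1. (\<Sum>j=1..k. a j) * (1/(real k + 1) - 1/(real k + 2)))
     = (\<Sum>k=1..m-1. (\<Sum>j=1..k. a j) * (1/(real k + 1) - 1/(real k + 2)))
          + ?c * (1/(real m + 1) - 1/(real m + 2))"
    using Suc.hyps by (cases m) auto
  moreover have "real (Suc m) = real m + 1" by simp
  ultimately show ?case
    using has_integral_combine[of 1 "real m" "real m + 1", OF _ _ Suc.IH last_piece] Suc.hyps
    by (simp only:)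
qed

lemma ln_fact_eq_sum_ln: "ln (fact m :: real) = (\<Sum>i=1..m. ln (real i))"
proof (induction m)
  case (Suc m)
  have "ln (fact (Suc m) :: real) = ln (real (Suc m)) + ln (fact m)"
    by (simp add: ln_mult del: of_nat_Suc)
  thus ?case using Suc.IH by simp
qed simp

lemma sum_ln_diff_eq_ln_fact:
  assumes "n \<ge> 2"
  shows "(\<Sum>j=1..n-2. ln (real n - real j)) = ln (fact (n-1))"
proof -
  have "(\<Sum>j=1..n-2. ln (real n - real j)) = (\<Sum>i=2..n-1. ln (real i))"
  proof (rule sum.reindex_bij_witness[of _ "\<lambda>i. n - i" "\<lambda>j. n - j"])
    fix i assume i: "i \<in> {1..n-2}"
    thus "n - (n - i) = i" "n - i \<in> {2..n-1}" by auto
    from i have "i \<le> n" by auto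
    thus "ln (real (n - i)) = ln (real n - real i)" by (simp add: of_nat_diff)
  qed auto
  also have "\<dots> = (\<Sum>i=1..n-1. ln (real i))"
  proof -
    have "{1..n-1} = insert 1 {2..n-1}" using assms by auto
    thus ?thesis by simp
  qed
  finally show ?thesis by (simp add: ln_fact_eq_sum_ln)
qed

lemma Psi_eq_sum:
  assumes "n \<ge> 2"
  shows "Psi n = (\<Sum>k=1..n-2. ln (real n - real k) / (real k + 1)) - ln (fact (n-1)) / real n"
proof -
  have upper: "real n - 1 = real (n-1)" and index: "n - 1 - 1 = n - 2"
    using assms by (simp_all add: of_nat_diff)
  have "Psi n = (\<Sum>k=1..n-2. (\<Sum>j=1..k. ln (real n - real j)) * (1/(real k + 1) - 1/(real k + 2)))"
    unfolding Psi_def upper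
    using has_integral_partial_sums_over_square[of "n-1" "\<lambda>j. ln (real n - real j)"] assms
    unfolding index by (intro integral_unique) simp
  also have "\<dots> = (\<Sum>k=1..n-2. ln (real n - real k) / (real k + 1))
                    - (\<Sum>j=1..n-2. ln (real n - real j)) / (real (n-2) + 2)"
    by (rule sum_partial_sums_telescoping)
  also have "real (n-2) + 2 = real n" using assms by (simp add: of_nat_diff)
  finally show ?thesis unfolding sum_ln_diff_eq_ln_fact[OF assms] .
qed

section \<open>Asymptotics of the rockers function\<close>

lemma rockers_pos: "n \<ge> 1 \<Longrightarrow> rockers n > 0"
  unfolding rockers_def by (auto intro!: prod_pos mult_pos_pos)

lemma ln_rockers:
  assumes "n \<ge> 2"
  shows "ln (rockers n) = (1 - 1/real n) * ln (fact n) + ln (real n) / real n - Psi n"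
proof -
  let ?p = "\<lambda>k. real (n - k) powr (real k / real (k + 1))"
  let ?S = "\<Sum>k=1..n-2. ln (real n - real k) / (real k + 1)"
  have p_pos: "?p k > 0" if "k \<in> {1..n-2}" for k using that by auto
  have "ln (rockers n) = ln (real n) + ln (\<Prod>k\<in>{1..n-2}. ?p k)"
    unfolding rockers_def using assms p_pos by (intro ln_mult_pos prod_pos) auto
  also have "ln (\<Prod>k\<in>{1..n-2}. ?p k) = (\<Sum>k=1..n-2. ln (?p k))"
    using p_pos by (intro ln_prod) force+
  also have "\<dots> = (\<Sum>k=1..n-2. ln (real n - real k) - ln (real n - real k) / (real k + 1))"
  proof (rule sum.cong)
    fix k assume "k \<in> {1..n-2}"
    hence "real (n - k) = real n - real k" by (subst of_nat_diff) auto
    moreover have "real k / real (k + 1) = 1 - 1/(real k + 1)" by (simp add: field_simps)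
    ultimately show "ln (?p k) = ln (real n - real k) - ln (real n - real k) / (real k + 1)"
      by (simp add: left_diff_distrib)
  qed simp
  also have "\<dots> = ln (fact (n-1)) - ?S"
    by (simp only: sum_subtractf sum_ln_diff_eq_ln_fact[OF assms])
  finally have ln_rockers_eq: "ln (rockers n) = ln (real n) + ln (fact (n-1)) - ?S"
    by simp
  have ln_fact: "ln (fact n :: real) = ln (real n) + ln (fact (n-1))"
    using assms by (simp add: fact_reduce ln_mult_pos)
  show ?thesis
    unfolding ln_rockers_eq ln_fact Psi_eq_sum[OF assms] using assms by (simp add: field_simps)
qed

definition rockers_approx :: "nat \<Rightarrow> real" where
  "rockers_approx n = real n powr (real n - 1 / (2 * real n) - 1 / 2) * sqrt (2 * pi)
                        / exp (real n + Psi n - 1)"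

lemma rockers_approx_pos: "n \<ge> 1 \<Longrightarrow> rockers_approx n > 0"
  unfolding rockers_approx_def by simp

lemma ln_rockers_minus_ln_approx:
  assumes "n \<ge> 2"
  shows "ln (rockers n) - ln (rockers_approx n)
           = ln (real n) / real n + (1 - 1/real n) * stirling_error n - ln (2 * pi) / 2"
proof -
  have n: "real n > 0" using assms by simp
  have ln_approx: "ln (rockers_approx n)
          = (real n - 1/(2 * real n) - 1/2) * ln (real n) + ln (2 * pi) / 2 - (real n + Psi n - 1)"
    unfolding rockers_approx_def using n by (simp add: ln_div ln_mult ln_sqrt)
  have ln_fact: "ln (fact n) = stirling_error n + (real n + 1/2) * ln (real n) - real n"
    by (simp add: stirling_error_def)
  have "(1 - 1/x) * (E + (x + 1/2) * L - x) + L/x - P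
          - ((x - 1/(2*x) - 1/2) * L + c - (x + P - 1)) = L/x + (1 - 1/x) * E - c"
    if "x > 0" for x E L P c :: real
    using that by (simp add: algebra_simps diff_divide_distrib add_divide_distrib)
  from this[OF n] show ?thesis
    unfolding ln_rockers[OF assms] ln_approx ln_fact .
qed

lemma ln_rockers_minus_ln_approx_tendsto:
  "(\<lambda>n. ln (rockers n) - ln (rockers_approx n)) \<longlonglongrightarrow> 0"
proof -
  have "(\<lambda>n::nat. ln (real n) / real n) \<longlonglongrightarrow> 0" "(\<lambda>n::nat. 1/real n) \<longlonglongrightarrow> 0"
    by real_asymp+
  hence "(\<lambda>n. ln (real n) / real n + (1 - 1/real n) * stirling_error n - ln (2 * pi) / 2)
           \<longlonglongrightarrow> 0 + (1 - 0) * (ln (2 * pi) / 2) - ln (2 * pi) / 2"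
    by (intro tendsto_intros stirling_error_limit)
  hence "(\<lambda>n. ln (real n) / real n + (1 - 1/real n) * stirling_error n - ln (2 * pi) / 2)
           \<longlonglongrightarrow> 0"
    by simp
  moreover have "eventually (\<lambda>n. ln (real n) / real n + (1 - 1/real n) * stirling_error n - ln (2 * pi) / 2
                   = ln (rockers n) - ln (rockers_approx n)) sequentially"
    using eventually_ge_at_top[of "2::nat"] by eventually_elim (metis ln_rockers_minus_ln_approx)
  ultimately show ?thesis by (rule Lim_transform_eventually)
qed

theorem mainTheorem1:
  shows "rockers \<sim>[at_top]
    (\<lambda>n. real n powr (real n - 1 / (2 * real n) - 1 / 2) * sqrt (2 * pi)
          / exp (real n + Psi n - 1))"
proof -
  have "eventually (\<lambda>n. exp (ln (rockers n) - ln (rockers_approx n)) = rockers n / rockers_approx n)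
          sequentially"
    using eventually_ge_at_top[of "1::nat"]
    by eventually_elim (simp add: exp_diff rockers_pos rockers_approx_pos)
  moreover have "(\<lambda>n. exp (ln (rockers n) - ln (rockers_approx n))) \<longlonglongrightarrow> 1"
    using tendsto_exp[OF ln_rockers_minus_ln_approx_tendsto] by simp
  ultimately have "(\<lambda>n. rockers n / rockers_approx n) \<longlonglongrightarrow> 1"
    by (rule Lim_transform_eventually[rotated])
  thus ?thesis
    unfolding rockers_approx_def by (rule asymp_equivI')
qed

end
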